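(* Let $G=(S,C,H)$ be a spider graph (thin with $r\ge2$, or thick with $r\ge3$) and $T$ an MDNS of $G$. Then $|\widehat T\cap H|\le\tilde\gamma_{gr}^{\times2}(G[H])$ and $|\widehat T\cap(C\cup S)|\le\tilde\gamma_{gr}^{\times2}(G[C\cup S])$.
   Context: Graphs are finite, simple, undirected; $N[v]$ closed neighborhood. A sequence of distinct vertices $(v_1,\dots,v_k)$ is a double neighborhood sequence (DNS) if for each $i$ some $w\in N[v_i]$ satisfies $|\{j<i:w\in N[v_j]\}|\le1$; an MDNS is a DNS of maximum length and $\tilde\gamma_{gr}^{\times2}$ is that length ($0$ for the graph with no vertices). $\widehat T$ is the vertex set of $T$. A spider graph $G=(S,C,H)$ of weight $r$: $V(G)$ is partitioned into $S=\{s_1,\dots,s_r\}$ (stable), $C=\{c_1,\dots,c_r\}$ (clique), $H$ (possibly empty, arbitrary edges inside), all edges between $C$ and $H$, none between $H$ and $S$; thin: $s_ic_j\in E$ iff $i=j$; thick: $s_ic_j\in E$ iff $i\neq j$. *)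

theory Defs
  imports Main
begin

definition graph :: "'a set \<Rightarrow> ('a \<Rightarrow> 'a \<Rightarrow> bool) \<Rightarrow> bool" where
  "graph V E \<longleftrightarrow> finite V \<and> (\<forall>u v. E u v \<longrightarrow> E v u) \<and> (\<forall>v. \<not> E v v)
     \<and> (\<forall>u v. E u v \<longrightarrow> u \<in> V \<and> v \<in> V)"

definition cnbh :: "'a set \<Rightarrow> ('a \<Rightarrow> 'a \<Rightarrow> bool) \<Rightarrow> 'a \<Rightarrow> 'a set" where
  "cnbh V E v = insert v {u \<in> V. E v u}"

definition induced :: "('a \<Rightarrow> 'a \<Rightarrow> bool) \<Rightarrow> 'a set \<Rightarrow> 'a \<Rightarrow> 'a \<Rightarrow> bool" where
  "induced E X = (\<lambda>u v. E u v \<and> u \<in> X \<and> v \<in> X)"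

definition is_dns :: "'a set \<Rightarrow> ('a \<Rightarrow> 'a \<Rightarrow> bool) \<Rightarrow> 'a list \<Rightarrow> bool" where
  "is_dns V E T \<longleftrightarrow> distinct T \<and> set T \<subseteq> V \<and>
     (\<forall>i < length T. \<exists>w \<in> cnbh V E (T ! i).
        card {j. j < i \<and> w \<in> cnbh V E (T ! j)} \<le> 1)"

definition dgr :: "'a set \<Rightarrow> ('a \<Rightarrow> 'a \<Rightarrow> bool) \<Rightarrow> nat" where
  "dgr V E = Max (length ` {T. is_dns V E T})"

definition is_mdns :: "'a set \<Rightarrow> ('a \<Rightarrow> 'a \<Rightarrow> bool) \<Rightarrow> 'a list \<Rightarrow> bool" where
  "is_mdns V E T \<longleftrightarrow> is_dns V E T \<and> (\<forall>T'. is_dns V E T' \<longrightarrow> length T' \<le> length T)"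

definition spider_base :: "'a set \<Rightarrow> ('a \<Rightarrow> 'a \<Rightarrow> bool) \<Rightarrow> nat \<Rightarrow> (nat \<Rightarrow> 'a) \<Rightarrow> (nat \<Rightarrow> 'a) \<Rightarrow> 'a set \<Rightarrow> bool" where
  "spider_base V E r s c H \<longleftrightarrow>
     inj_on s {..<r} \<and> inj_on c {..<r} \<and>
     s ` {..<r} \<inter> c ` {..<r} = {} \<and> s ` {..<r} \<inter> H = {} \<and> c ` {..<r} \<inter> H = {} \<and>
     V = s ` {..<r} \<union> c ` {..<r} \<union> H \<and>
     (\<forall>i<r. \<forall>j<r. \<not> E (s i) (s j)) \<and>
     (\<forall>i<r. \<forall>j<r. i \<noteq> j \<longrightarrow> E (c i) (c j)) \<and>
     (\<forall>i<r. \<forall>h\<in>H. E (c i) h) \<and>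
     (\<forall>i<r. \<forall>h\<in>H. \<not> E (s i) h)"

definition thin_spider where
  "thin_spider V E r s c H \<longleftrightarrow> spider_base V E r s c H \<and>
     (\<forall>i<r. \<forall>j<r. E (s i) (c j) \<longleftrightarrow> i = j)"

definition thick_spider where
  "thick_spider V E r s c H \<longleftrightarrow> spider_base V E r s c H \<and>
     (\<forall>i<r. \<forall>j<r. E (s i) (c j) \<longleftrightarrow> i \<noteq> j)"

end

theory Submission
  imports Defs
begin

text \<open>
  Restricting a DNS of a graph G to a vertex set X keeps it a DNS of G[X] as soon as every vertex
  v \<in> X of the sequence still has a footprint in G[X], i.e. a vertex of its closed neighbourhood in
  G[X] dominated at most once by the earlier vertices of X. In a spider this holds for X = H and
  for X = C \<union> S. A footprint of v \<in> H outside H is some c_i, which dominates all of H, so at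
  most one earlier vertex of H exists and v is its own footprint in G[H]. A footprint of
  v \<in> C \<union> S outside C \<union> S lies in H, so v = c_i and at most one earlier vertex c_m of C exists;
  then the leg s_i (thin spider) or s_m (thick spider) is a neighbour of c_i which no earlier
  vertex of C \<union> S other than itself dominates.
\<close>

definition dominators :: "'a set \<Rightarrow> ('a \<Rightarrow> 'a \<Rightarrow> bool) \<Rightarrow> 'a list \<Rightarrow> 'a \<Rightarrow> 'a set" where
  "dominators V E xs w = {u \<in> set xs. w \<in> cnbh V E u}"

definition appendable :: "'a set \<Rightarrow> ('a \<Rightarrow> 'a \<Rightarrow> bool) \<Rightarrow> 'a list \<Rightarrow> 'a \<Rightarrow> bool" where
  "appendable V E xs v \<longleftrightarrow> (\<exists>w \<in> cnbh V E v. card (dominators V E xs w) \<le> 1)"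

lemma appendableI:
  assumes "w \<in> cnbh V E v" "dominators V E xs w \<subseteq> A" "finite A" "card A \<le> 1"
  shows "appendable V E xs v"
  unfolding appendable_def using assms(1) le_trans[OF card_mono[OF assms(3,2)] assms(4)] by blast

lemma card_indices_eq_card_take:
  assumes "distinct T" "i \<le> length T"
  shows "card {j. j < i \<and> P (T ! j)} = card {u \<in> set (take i T). P u}"
proof -
  have "inj_on (nth T) {j. j < i \<and> P (T ! j)}"
    using assms by (auto simp: inj_on_def nth_eq_iff_index_eq)
  moreover have "nth T ` {j. j < i \<and> P (T ! j)} = {u \<in> set (take i T). P u}"
    using assms by (force simp: in_set_conv_nth)
  ultimately show ?thesis
    using card_image by fastforce
qed

lemma is_dns_iff_appendable:
  "is_dns V E T \<longleftrightarrow>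
     distinct T \<and> set T \<subseteq> V \<and> (\<forall>i < length T. appendable V E (take i T) (T ! i))"
proof -
  have "card {j. j < i \<and> w \<in> cnbh V E (T ! j)} = card (dominators V E (take i T) w)"
    if "distinct T" "i < length T" for i w
    using card_indices_eq_card_take[of T i "\<lambda>u. w \<in> cnbh V E u"] that
    unfolding dominators_def by simp
  then show ?thesis
    unfolding is_dns_def appendable_def by auto
qed

lemma is_dns_Nil: "is_dns V E []"
  by (simp add: is_dns_def)

lemma is_dns_snoc:
  "is_dns V E (T @ [v]) \<longleftrightarrow> is_dns V E T \<and> v \<notin> set T \<and> v \<in> V \<and> appendable V E T v"
proof -
  have "(\<forall>i < length (T @ [v]). appendable V E (take i (T @ [v])) ((T @ [v]) ! i)) \<longleftrightarrow>
        (\<forall>i < length T. appendable V E (take i T) (T ! i)) \<and> appendable V E T v"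
    by (auto simp: nth_append less_Suc_eq)
  then show ?thesis
    unfolding is_dns_iff_appendable by auto
qed

lemma is_dns_filter_induced:
  assumes "is_dns V E T"
    and "\<And>xs v. is_dns V E (xs @ [v]) \<Longrightarrow> v \<in> X \<Longrightarrow>
           appendable X (induced E X) [x \<leftarrow> xs. x \<in> X] v"
  shows "is_dns X (induced E X) [x \<leftarrow> T. x \<in> X]"
  using assms(1)
proof (induction T rule: rev_induct)
  case Nil
  then show ?case by (simp add: is_dns_Nil)
next
  case (snoc v T)
  then have "is_dns X (induced E X) [x \<leftarrow> T. x \<in> X]" "v \<notin> set T"
    by (simp_all add: is_dns_snoc)
  then show ?case
    using assms(2)[OF snoc.prems] by (simp add: is_dns_snoc)
qed

lemma dominators_induced_filter_subset:
  assumes "X \<subseteq> V"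
  shows "dominators X (induced E X) [x \<leftarrow> xs. x \<in> X] w \<subseteq> dominators V E xs w"
  using assms by (auto simp: dominators_def cnbh_def induced_def)

lemma appendable_induced_if_footprint_inside:
  assumes "X \<subseteq> V" "v \<in> X" "w \<in> X" "w \<in> cnbh V E v" "card (dominators V E xs w) \<le> 1"
  shows "appendable X (induced E X) [x \<leftarrow> xs. x \<in> X] v"
proof (rule appendableI)
  show "w \<in> cnbh X (induced E X) v"
    using assms by (auto simp: cnbh_def induced_def)
  show "dominators X (induced E X) [x \<leftarrow> xs. x \<in> X] w \<subseteq> dominators V E xs w"
    using assms(1) by (rule dominators_induced_filter_subset)
qed (use assms(5) in \<open>simp_all add: dominators_def\<close>)

lemma length_le_dgr:
  assumes "finite X" "is_dns X F T"
  shows "length T \<le> dgr X F"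
proof -
  have "length T' \<le> card X" if "is_dns X F T'" for T'
    using that distinct_card card_mono[OF assms(1)] unfolding is_dns_def by metis
  then have "finite (length ` {T. is_dns X F T})"
    by (auto intro: finite_subset[of _ "{..card X}"])
  then show ?thesis
    unfolding dgr_def using assms(2) by simp
qed

lemma card_inter_le_dgr_induced:
  assumes "finite X" "is_dns V E T"
    and "\<And>xs v. is_dns V E (xs @ [v]) \<Longrightarrow> v \<in> X \<Longrightarrow>
           appendable X (induced E X) [x \<leftarrow> xs. x \<in> X] v"
  shows "card (set T \<inter> X) \<le> dgr X (induced E X)"
proof -
  have "card (set T \<inter> X) = length [x \<leftarrow> T. x \<in> X]"
    using assms(2) distinct_length_filter unfolding is_dns_def by (metis Int_commute Collect_mem_eq)
  also have "\<dots> \<le> dgr X (induced E X)"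
    using length_le_dgr[OF assms(1) is_dns_filter_induced[OF assms(2,3)]] .
  finally show ?thesis .
qed

locale spider =
  fixes V :: "'a set" and E :: "'a \<Rightarrow> 'a \<Rightarrow> bool"
    and r :: nat and s c :: "nat \<Rightarrow> 'a" and H :: "'a set"
  assumes graph: "graph V E" and base: "spider_base V E r s c H"
begin

abbreviation S where "S \<equiv> s ` {..<r}"
abbreviation C where "C \<equiv> c ` {..<r}"

lemma edge_sym: "E u v \<Longrightarrow> E v u"
  using graph by (simp add: graph_def)

lemma V_eq: "V = S \<union> C \<union> H"
  using base by (simp add: spider_base_def)

lemma finite_V: "finite V"
  using graph by (simp add: graph_def)

lemma edge_in_V: "E u v \<Longrightarrow> v \<in> V"
  using graph by (simp add: graph_def)

lemma no_edge_S_S: "u \<in> S \<Longrightarrow> v \<in> S \<Longrightarrow> \<not> E u v"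
  using base by (auto simp: spider_base_def)

lemma no_edge_S_H:
  assumes "u \<in> S" "h \<in> H"
  shows "\<not> E u h \<and> \<not> E h u"
proof -
  have "\<not> E u h"
    using assms base by (auto simp: spider_base_def)
  then show ?thesis
    using edge_sym by blast
qed

lemma edge_C_H: "u \<in> C \<Longrightarrow> h \<in> H \<Longrightarrow> E u h \<and> E h u"
  using base edge_sym by (auto simp: spider_base_def)

lemma appendable_H:
  assumes "is_dns V E (xs @ [v])" "v \<in> H"
  shows "appendable H (induced E H) [x \<leftarrow> xs. x \<in> H] v"
proof -
  obtain w where w: "w \<in> cnbh V E v" and card_w: "card (dominators V E xs w) \<le> 1"
    using assms(1) by (auto simp: is_dns_snoc appendable_def)
  show ?thesis
  proof (cases "w \<in> H")
    case True
    then show ?thesis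
      using appendable_induced_if_footprint_inside[OF _ assms(2) True w card_w] V_eq by blast
  next
    case False
    with w assms(2) have "E v w"
      by (auto simp: cnbh_def)
    with False assms(2) have "w \<in> C"
      using V_eq edge_in_V no_edge_S_H by blast
    then have sub: "dominators H (induced E H) [x \<leftarrow> xs. x \<in> H] v \<subseteq> dominators V E xs w"
      using edge_C_H edge_in_V by (auto simp: dominators_def cnbh_def)
    show ?thesis
      by (rule appendableI[OF _ sub]) (use card_w in \<open>simp_all add: cnbh_def dominators_def\<close>)
  qed
qed

text \<open>
  The only place where thinness or thickness enters; a thick spider needs r \<ge> 2 only for D = {}.
\<close>
lemma exists_leg_avoiding:
  assumes thin_or_thick: "(\<forall>i<r. \<forall>j<r. E (s i) (c j) \<longleftrightarrow> i = j)
      \<or> (r \<ge> 2 \<and> (\<forall>i<r. \<forall>j<r. E (s i) (c j) \<longleftrightarrow> i \<noteq> j))"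
    and "i < r" "D \<subseteq> C" "c i \<notin> D" "finite D" "card D \<le> 1"
  shows "\<exists>j<r. E (c i) (s j) \<and> (\<forall>u\<in>D. \<not> E u (s j))"
  using thin_or_thick
proof (elim disjE conjE)
  assume thin: "\<forall>i<r. \<forall>j<r. E (s i) (c j) \<longleftrightarrow> i = j"
  have "E (c i) (s i)"
    using thin assms(2) edge_sym[of "s i" "c i"] by simp
  moreover have "\<not> E u (s i)" if u: "u \<in> D" for u
  proof -
    obtain k where k: "k < r" "u = c k"
      using u assms(3) by auto
    with u assms(4) have "k \<noteq> i"
      by auto
    with k thin assms(2) show ?thesis
      using edge_sym[of u "s i"] by auto
  qed
  ultimately show ?thesis
    using assms(2) by blast
next
  assume "r \<ge> 2" and thick: "\<forall>i<r. \<forall>j<r. E (s i) (c j) \<longleftrightarrow> i \<noteq> j"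
  have leg: "E (c i) (s j)" if "j < r" "j \<noteq> i" for j
    using thick that assms(2) edge_sym[of "s j" "c i"] by auto
  consider "D = {}" | u where "D = {u}"
    using assms(5,6) by (auto simp: le_Suc_eq card_1_singleton_iff)
  then show ?thesis
  proof cases
    case 1
    have "\<exists>j<r. j \<noteq> i"
      using \<open>r \<ge> 2\<close> by (intro exI[of _ "if i = 0 then 1 else 0"]) auto
    then show ?thesis
      using 1 leg by blast
  next
    case 2
    then obtain m where m: "m < r" "u = c m" "m \<noteq> i"
      using assms(3,4) by auto
    then have "\<not> E u (s m)"
      using thick edge_sym[of u "s m"] by auto
    with m 2 show ?thesis
      using leg by blast
  qed
qed

lemma appendable_C_S:
  assumes thin_or_thick: "(\<forall>i<r. \<forall>j<r. E (s i) (c j) \<longleftrightarrow> i = j)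
      \<or> (r \<ge> 2 \<and> (\<forall>i<r. \<forall>j<r. E (s i) (c j) \<longleftrightarrow> i \<noteq> j))"
    and "is_dns V E (xs @ [v])" "v \<in> C \<union> S"
  shows "appendable (C \<union> S) (induced E (C \<union> S)) [x \<leftarrow> xs. x \<in> C \<union> S] v"
proof -
  obtain w where w: "w \<in> cnbh V E v" and card_w: "card (dominators V E xs w) \<le> 1"
    and v_new: "v \<notin> set xs"
    using assms(2) by (auto simp: is_dns_snoc appendable_def)
  show ?thesis
  proof (cases "w \<in> C \<union> S")
    case True
    then show ?thesis
      using appendable_induced_if_footprint_inside[OF _ assms(3) True w card_w] V_eq by blast
  next
    case False
    with w assms(3) have "E v w" "w \<in> H"
      using V_eq by (auto simp: cnbh_def)
    with assms(3) obtain i where i: "i < r" "v = c i"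
      using no_edge_S_H by blast
    define D where "D = set xs \<inter> C"
    have "D \<subseteq> dominators V E xs w"
      using edge_C_H \<open>w \<in> H\<close> edge_in_V by (auto simp: D_def dominators_def cnbh_def)
    then have "card D \<le> 1"
      using card_w card_mono[of "dominators V E xs w" D] by (simp add: dominators_def)
    then obtain j where j: "j < r" "E (c i) (s j)" and avoid: "\<forall>u\<in>D. \<not> E u (s j)"
      using exists_leg_avoiding[OF thin_or_thick i(1), of D] i v_new by (auto simp: D_def)
    have sub: "dominators (C \<union> S) (induced E (C \<union> S)) [x \<leftarrow> xs. x \<in> C \<union> S] (s j) \<subseteq> {s j}"
      using avoid no_edge_S_S j(1) by (auto simp: dominators_def cnbh_def induced_def D_def)
    show ?thesis
      by (rule appendableI[OF _ sub]) (use i j in \<open>auto simp: cnbh_def induced_def\<close>)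
  qed
qed

end

theorem lemma6:
  fixes V :: "'a set" and E :: "'a \<Rightarrow> 'a \<Rightarrow> bool"
    and r :: nat and s c :: "nat \<Rightarrow> 'a" and H :: "'a set" and T :: "'a list"
  assumes "graph V E"
    and "(thin_spider V E r s c H \<and> r \<ge> 2) \<or> (thick_spider V E r s c H \<and> r \<ge> 3)"
    and "is_mdns V E T"
  shows "card (set T \<inter> H) \<le> dgr H (induced E H)
       \<and> card (set T \<inter> (c ` {..<r} \<union> s ` {..<r}))
           \<le> dgr (c ` {..<r} \<union> s ` {..<r}) (induced E (c ` {..<r} \<union> s ` {..<r}))"
proof -
  interpret spider V E r s c H
    using assms(1,2) by unfold_locales (auto simp: thin_spider_def thick_spider_def)
  have thin_or_thick: "(\<forall>i<r. \<forall>j<r. E (s i) (c j) \<longleftrightarrow> i = j)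
      \<or> (r \<ge> 2 \<and> (\<forall>i<r. \<forall>j<r. E (s i) (c j) \<longleftrightarrow> i \<noteq> j))"
    using assms(2) by (auto simp: thin_spider_def thick_spider_def)
  have dns: "is_dns V E T"
    using assms(3) by (simp add: is_mdns_def)
  have "finite H"
    using finite_V V_eq by simp
  then show ?thesis
    using card_inter_le_dgr_induced[OF _ dns appendable_H]
      card_inter_le_dgr_induced[OF _ dns appendable_C_S[OF thin_or_thick]] by simp
qed

end
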